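(* Let $G$ and $N$ be finitely presented groups, $Q$ a finite group, and $H$ an $N$ by $Q$ extension with transversal map $s:Q\to H$. The following are equivalent: (1) there is a surjective homomorphism $G\to H$; (2) there are homomorphisms $\tau:G\to Q$ and $\kappa:G\to H$ such that (a) $\tau$ is surjective, (b) for all $g\in G$, if $\kappa(g)=n\,s(q)$ with $n\in N$, $q\in Q$, then $q=\tau(g)$, and (c) for every $n\in N$ there exists $g\in\ker(\tau)$ with $\kappa(g)=n\,s(1_Q)$.
   Context: $H$ is an $N$ by $Q$ extension if $N$ is a normal subgroup of $H$ with $H/N\cong Q$; write $\pi_Q:H\to Q$ for the resulting epimorphism. A transversal map is a map $s:Q\to H$ with $\pi_Q(s(q))=q$ for all $q$ (so its image meets each coset of $N$ exactly once), chosen with $s(1_Q)=1_H$; every element of $H$ is uniquely $n\,s(q)$ with $n\in N$, $q\in Q$. *)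

theory Defs
  imports "HOL-Algebra.Algebra"
begin

text \<open>Words over a generating set: a letter (x, True) stands for x, (x, False) for its inverse.\<close>

fun word_eval :: "('a, 'b) monoid_scheme \<Rightarrow> ('a \<times> bool) list \<Rightarrow> 'a" where
  "word_eval G [] = \<one>\<^bsub>G\<^esub>"
| "word_eval G ((x, b) # w) =
     (if b then x else inv\<^bsub>G\<^esub> x) \<otimes>\<^bsub>G\<^esub> word_eval G w"

text \<open>The congruence on words generated by free cancellation and by the relators R;
  \<open>pres_eq R u v\<close> means u and v represent the same element of the group with
  presentation by generators and relators R.\<close>

inductive pres_eq :: "('a \<times> bool) list set \<Rightarrow> ('a \<times> bool) list \<Rightarrow> ('a \<times> bool) list \<Rightarrow> bool"
  for R where
  pres_refl: "pres_eq R w w"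
| pres_sym: "pres_eq R u v \<Longrightarrow> pres_eq R v u"
| pres_trans: "pres_eq R u v \<Longrightarrow> pres_eq R v w \<Longrightarrow> pres_eq R u w"
| pres_cancel: "pres_eq R (u @ [(x, b), (x, \<not> b)] @ v) (u @ v)"
| pres_rel: "r \<in> R \<Longrightarrow> pres_eq R (u @ r @ v) (u @ v)"

text \<open>G is finitely presented: there is a finite generating set X of G and a finite
  set R of relator words over X such that a word over X is trivial in G exactly when
  it is trivial in the presented group \<open>\<langle>X | R\<rangle>\<close>, i.e. G is isomorphic to \<open>\<langle>X | R\<rangle>\<close>.\<close>

definition finitely_presented :: "('a, 'b) monoid_scheme \<Rightarrow> bool" where
  "finitely_presented G \<longleftrightarrow> group G \<and>
     (\<exists>Gens Rels. finite Gens \<and> Gens \<subseteq> carrier G \<and> generate G Gens = carrier G \<and>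
            finite Rels \<and> (\<forall>r\<in>Rels. fst ` set r \<subseteq> Gens) \<and>
            (\<forall>w. fst ` set w \<subseteq> Gens \<longrightarrow> (word_eval G w = \<one>\<^bsub>G\<^esub> \<longleftrightarrow> pres_eq Rels w [])))"

end

theory Submission
  imports Defs
begin

text \<open>Condition (b) says exactly that \<open>\<tau> = \<pi> \<circ> \<kappa>\<close>, since every element of H lies in the coset
  \<open>N s(q)\<close> with \<open>q\<close> its image in Q. Condition (c) then says that \<open>\<kappa>(G)\<close> contains N, and
  (a) that \<open>\<kappa>(G)\<close> maps onto Q. A subgroup of H containing the kernel N of \<open>\<pi>\<close> and mapping onto
  \<open>\<pi>(H)\<close> is all of H, so \<open>\<kappa>\<close> is surjective. Conversely a surjection \<open>f\<close> gives
  \<open>\<kappa> = f\<close>, \<open>\<tau> = \<pi> \<circ> f\<close>.\<close>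

lemma (in group_hom) subgroup_eq_carrier_if_kernel_subset:
  assumes K: "subgroup K G" and img: "h ` K = h ` carrier G" and ker: "kernel G H h \<subseteq> K"
  shows "K = carrier G"
proof
  show "K \<subseteq> carrier G" using K by (rule subgroup.subset)
  show "carrier G \<subseteq> K"
  proof
    fix x assume x: "x \<in> carrier G"
    then obtain k where k: "k \<in> K" "h k = h x" using img by (metis imageE imageI)
    have kG: "k \<in> carrier G" using K k(1) by (rule subgroup.mem_carrier)
    have "x \<otimes> inv k \<in> kernel G H h" using x kG k(2) by (simp add: kernel_def)
    then have "x \<otimes> inv k \<otimes> k \<in> K" using ker k(1) K by (blast intro: subgroup.m_closed)
    then show "x \<in> K" using x kG by (simp add: G.m_assoc)
  qed
qed

lemma (in group_hom) transversal_coset_condition_iff: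
  assumes s_closed: "s \<in> carrier H \<rightarrow> carrier G"
    and s_section: "\<And>q. q \<in> carrier H \<Longrightarrow> h (s q) = q"
    and \<kappa>_closed: "\<kappa> \<in> A \<rightarrow> carrier G"
  shows "(\<forall>g \<in> A. \<forall>n \<in> kernel G H h. \<forall>q \<in> carrier H. \<kappa> g = n \<otimes> s q \<longrightarrow> q = \<tau> g)
     \<longleftrightarrow> (\<forall>g \<in> A. \<tau> g = h (\<kappa> g))"
proof
  assume coset: "\<forall>g \<in> A. \<forall>n \<in> kernel G H h. \<forall>q \<in> carrier H. \<kappa> g = n \<otimes> s q \<longrightarrow> q = \<tau> g"
  show "\<forall>g \<in> A. \<tau> g = h (\<kappa> g)"
  proof
    fix g assume g: "g \<in> A"
    define q where "q = h (\<kappa> g)"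
    have \<kappa>g: "\<kappa> g \<in> carrier G" using g \<kappa>_closed by blast
    have q: "q \<in> carrier H" using \<kappa>g by (simp add: q_def)
    have sq: "s q \<in> carrier G" using q s_closed by blast
    have "\<kappa> g \<otimes> inv s q \<in> kernel G H h"
      using \<kappa>g sq s_section[OF q] by (simp add: kernel_def q_def)
    moreover have "\<kappa> g = \<kappa> g \<otimes> inv s q \<otimes> s q" using \<kappa>g sq by (simp add: G.m_assoc)
    ultimately show "\<tau> g = h (\<kappa> g)" using coset g q by (auto simp: q_def)
  qed
next
  assume "\<forall>g \<in> A. \<tau> g = h (\<kappa> g)"
  then show "\<forall>g \<in> A. \<forall>n \<in> kernel G H h. \<forall>q \<in> carrier H. \<kappa> g = n \<otimes> s q \<longrightarrow> q = \<tau> g"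
    using s_closed s_section by (auto simp: kernel_def Pi_iff)
qed

theorem lemma2p5:
  fixes G :: "('a, 'm) monoid_scheme" and H :: "('b, 'n) monoid_scheme"
    and Q :: "('c, 'o) monoid_scheme"
    and N :: "'b set" and \<pi> :: "'b \<Rightarrow> 'c" and s :: "'c \<Rightarrow> 'b"
  assumes G_fp: "finitely_presented G"
    and H_grp: "group H" and Q_grp: "group Q" and Q_fin: "finite (carrier Q)"
    and N_normal: "N \<lhd> H"
    and N_fp: "finitely_presented (H\<lparr>carrier := N\<rparr>)"
    and \<pi>_hom: "\<pi> \<in> hom H Q" and \<pi>_surj: "\<pi> ` carrier H = carrier Q"
    and \<pi>_ker: "kernel H Q \<pi> = N"
    and s_map: "s \<in> carrier Q \<rightarrow> carrier H"
    and s_sec: "\<And>q. q \<in> carrier Q \<Longrightarrow> \<pi> (s q) = q"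
    and s_one: "s \<one>\<^bsub>Q\<^esub> = \<one>\<^bsub>H\<^esub>"
  shows "(\<exists>f \<in> hom G H. f ` carrier G = carrier H) \<longleftrightarrow>
         (\<exists>\<tau> \<in> hom G Q. \<exists>\<kappa> \<in> hom G H.
            \<tau> ` carrier G = carrier Q \<and>
            (\<forall>g \<in> carrier G. \<forall>n \<in> N. \<forall>q \<in> carrier Q.
                \<kappa> g = n \<otimes>\<^bsub>H\<^esub> s q \<longrightarrow> q = \<tau> g) \<and>
            (\<forall>n \<in> N. \<exists>g \<in> kernel G Q \<tau>. \<kappa> g = n \<otimes>\<^bsub>H\<^esub> s \<one>\<^bsub>Q\<^esub>))"
proof -
  have G_grp: "group G" using G_fp by (simp add: finitely_presented_def)
  interpret \<pi>: group_hom H Q \<pi> using H_grp Q_grp \<pi>_hom by (simp add: group_hom_def group_hom_axioms_def)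
  have coset_iff: "(\<forall>g \<in> carrier G. \<forall>n \<in> N. \<forall>q \<in> carrier Q. \<kappa> g = n \<otimes>\<^bsub>H\<^esub> s q \<longrightarrow> q = \<tau> g)
      \<longleftrightarrow> (\<forall>g \<in> carrier G. \<tau> g = \<pi> (\<kappa> g))" if "\<kappa> \<in> hom G H" for \<tau> \<kappa>
  proof -
    have "\<kappa> \<in> carrier G \<rightarrow> carrier H" using that by (simp add: hom_def)
    then show ?thesis
      using \<pi>.transversal_coset_condition_iff[where s = s and A = "carrier G"] s_map s_sec \<pi>_ker
      by simp
  qed
  show ?thesis (is "?surj \<longleftrightarrow> ?pair")
  proof (intro iffI; elim bexE conjE)
    fix f assume f: "f \<in> hom G H" and f_surj: "f ` carrier G = carrier H"
    have "\<forall>g \<in> carrier G. \<forall>n \<in> N. \<forall>q \<in> carrier Q. f g = n \<otimes>\<^bsub>H\<^esub> s q \<longrightarrow> q = (\<pi> \<circ> f) g"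
      unfolding coset_iff[OF f] by simp
    moreover have "\<forall>n \<in> N. \<exists>g \<in> kernel G Q (\<pi> \<circ> f). f g = n \<otimes>\<^bsub>H\<^esub> s \<one>\<^bsub>Q\<^esub>"
      using f_surj \<pi>_ker[symmetric] s_one by (force simp: kernel_def)
    moreover have "(\<pi> \<circ> f) ` carrier G = carrier Q" using f_surj \<pi>_surj by (metis image_comp)
    ultimately show ?pair
      using f hom_compose[OF f \<pi>_hom] by blast
  next
    fix \<tau> \<kappa> assume \<tau>: "\<tau> \<in> hom G Q" and \<kappa>: "\<kappa> \<in> hom G H"
      and \<tau>_surj: "\<tau> ` carrier G = carrier Q"
      and coset: "\<forall>g \<in> carrier G. \<forall>n \<in> N. \<forall>q \<in> carrier Q. \<kappa> g = n \<otimes>\<^bsub>H\<^esub> s q \<longrightarrow> q = \<tau> g"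
      and kernel_lift: "\<forall>n \<in> N. \<exists>g \<in> kernel G Q \<tau>. \<kappa> g = n \<otimes>\<^bsub>H\<^esub> s \<one>\<^bsub>Q\<^esub>"
    interpret \<kappa>: group_hom G H \<kappa> using G_grp H_grp \<kappa> by (simp add: group_hom_def group_hom_axioms_def)
    have "\<pi> ` \<kappa> ` carrier G = \<tau> ` carrier G"
      using coset coset_iff[OF \<kappa>] by (simp add: image_image)
    moreover have "N \<subseteq> \<kappa> ` carrier G"
      using kernel_lift \<pi>_ker s_one by (force simp: kernel_def)
    ultimately have "\<kappa> ` carrier G = carrier H"
      using \<pi>.subgroup_eq_carrier_if_kernel_subset[OF \<kappa>.img_is_subgroup] \<tau>_surj \<pi>_surj \<pi>_ker by simp
    then show ?surj using \<kappa> by blast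
  qed
qed

end
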